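(* Let $\mu$ be a probability measure on $\mathbb{R}^p$ whose support contains a nonempty open set, let $\sigma>0$, $R>0$, and let $G^*$ and $G_n$ ($n\ge1$) be probability measures on $\mathbb{R}^p$ with $G_n\{\beta:\|\beta\|\le R\}=1$ for all $n$ and $G^*\{\beta:\|\beta\|\le R\}=1$. If $\mathfrak{d}_{\mathrm{LP}}(P(G_n,\mu),P(G^*,\mu))\to0$, then $\mathfrak{d}_{\mathrm{LP}}(G_n,G^* )\to0$.
   Context: For a probability measure $G$ on $\mathbb{R}^p$, $P(G,\mu)$ denotes the joint distribution on $\mathbb{R}^p\times\mathbb{R}$ of $(X,Y)$ where $Y=X^\top\beta+\sigma Z$ with $X\sim\mu$, $\beta\sim G$, $Z\sim N(0,1)$ independent. $\mathfrak{d}_{\mathrm{LP}}$ is the Lévy–Prokhorov metric. *)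

theory Defs
  imports "HOL-Probability.Probability"
begin

definition thick :: "'b::metric_space set \<Rightarrow> real \<Rightarrow> 'b set" where
  "thick A e = {x. \<exists>y\<in>A. dist x y < e}"

definition lp_dist :: "'b::metric_space measure \<Rightarrow> 'b measure \<Rightarrow> real" where
  "lp_dist M N = Inf {e. e > 0 \<and> (\<forall>A\<in>sets borel.
       measure M A \<le> measure N (thick A e) + e \<and> measure N A \<le> measure M (thick A e) + e)}"

definition msupport :: "'b::topological_space measure \<Rightarrow> 'b set" where
  "msupport M = {x. \<forall>U. open U \<and> x \<in> U \<longrightarrow> emeasure M U > 0}"

definition std_normal :: "real measure" where
  "std_normal = density lborel std_normal_density"

text \<open>P(G,mu): law of (X, X.beta + sigma Z) with X ~ mu, beta ~ G, Z ~ N(0,1) independent.\<close>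
definition lin_model :: "real \<Rightarrow> 'a::euclidean_space measure \<Rightarrow> 'a measure \<Rightarrow> ('a \<times> real) measure" where
  "lin_model \<sigma> G \<mu> = distr ((\<mu> \<Otimes>\<^sub>M G) \<Otimes>\<^sub>M std_normal) borel
      (\<lambda>((x, b), z). (x, x \<bullet> b + \<sigma> * z))"

end

theory Submission
  imports Defs
begin

text \<open>Write \<open>cos_transform G \<theta> x = \<integral> cos (x \<bullet> \<beta> + \<theta>) dG(\<beta>)\<close>. Testing \<open>P(G, \<mu>)\<close> against
  the bounded Lipschitz function \<open>(x, y) \<mapsto> \<phi> x * cos (y + \<theta>)\<close> and integrating out the
  Gaussian noise gives \<open>exp (- \<sigma>\<^sup>2 / 2) * \<integral> \<phi> * cos_transform G \<theta> d\<mu>\<close>; since Levy--Prokhorov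
  convergence implies convergence of integrals of bounded Lipschitz functions, these averages
  converge. All the \<open>cos_transform G \<theta>\<close> are \<open>R\<close>-Lipschitz, so taking for \<open>\<phi>\<close> narrow bumps
  around points of the open set inside the support of \<open>\<mu>\<close> shows that the characteristic
  functions of \<open>G n\<close> converge to that of \<open>G\<^sup>*\<close> on a ball. Because all measures live on the
  ball of radius \<open>R\<close>, difference quotients of characteristic functions converge uniformly, so
  convergence near a point propagates from \<open>exp (i x \<bullet> \<beta>)\<close> to \<open>p \<beta> * exp (i x \<bullet> \<beta>)\<close> for every
  polynomial \<open>p\<close>; Stone--Weierstrass then gives weak convergence, which on a compact set implies
  Levy--Prokhorov convergence.\<close>

section \<open>Levy--Prokhorov distance\<close>

definition lp_close :: "'b::metric_space measure \<Rightarrow> 'b measure \<Rightarrow> real \<Rightarrow> bool" where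
  "lp_close M N e \<longleftrightarrow> (\<forall>A\<in>sets borel. measure M A \<le> measure N (thick A e) + e)"

lemma lp_dist_lp_close: "lp_dist M N = Inf {e. 0 < e \<and> lp_close M N e \<and> lp_close N M e}"
  unfolding lp_dist_def lp_close_def by (simp add: ball_conj_distrib)

lemma open_thick: "open (thick A e)"
proof -
  have "thick A e = (\<Union>y\<in>A. ball y e)" by (auto simp: thick_def dist_commute)
  then show ?thesis by auto
qed

lemma lp_close_1:
  assumes "prob_space M"
  shows "lp_close M N 1"
proof -
  have "measure M A \<le> measure N (thick A 1) + 1" for A
    using prob_space.prob_le_1[OF assms, of A] measure_nonneg[of N "thick A 1"] by linarith
  then show ?thesis by (simp add: lp_close_def)
qed

lemma lp_dist_nonneg:
  assumes "prob_space M" "prob_space N"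
  shows "0 \<le> lp_dist M N"
  unfolding lp_dist_lp_close
  by (rule cInf_greatest) (use lp_close_1[OF assms(1), of N] lp_close_1[OF assms(2), of M] in auto)

lemma lp_dist_le:
  assumes "0 < e" "lp_close M N e" "lp_close N M e"
  shows "lp_dist M N \<le> e"
  unfolding lp_dist_lp_close
proof (rule cInf_lower)
  show "bdd_below {e. 0 < e \<and> lp_close M N e \<and> lp_close N M e}"
    by (rule bdd_belowI[of _ 0]) simp
qed (use assms in simp)

lemma lp_dist_lessE:
  assumes "prob_space M" "prob_space N" "lp_dist M N < d"
  obtains e where "0 < e" "e < d" "lp_close M N e" "lp_close N M e"
proof -
  let ?E = "{e. 0 < e \<and> lp_close M N e \<and> lp_close N M e}"
  have "?E \<noteq> {}"
    using lp_close_1[OF assms(1), of N] lp_close_1[OF assms(2), of M] by auto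
  moreover have "Inf ?E < d" using assms(3) by (simp add: lp_dist_lp_close)
  ultimately obtain e where "e \<in> ?E" "e < d" by (metis cInf_lessD)
  then show ?thesis using that by auto
qed

lemma lp_dist_tendsto_zeroI:
  assumes "\<And>n. prob_space (M n)" "prob_space N"
    and close: "\<And>e. 0 < e \<Longrightarrow> \<forall>\<^sub>F n in sequentially. lp_close (M n) N e \<and> lp_close N (M n) e"
  shows "(\<lambda>n. lp_dist (M n) N) \<longlonglongrightarrow> 0"
proof (rule tendstoI)
  fix \<epsilon> :: real assume "0 < \<epsilon>"
  then have "\<forall>\<^sub>F n in sequentially. lp_close (M n) N (\<epsilon>/2) \<and> lp_close N (M n) (\<epsilon>/2)"
    by (intro close) simp
  then show "\<forall>\<^sub>F n in sequentially. dist (lp_dist (M n) N) 0 < \<epsilon>"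
  proof eventually_elim
    case (elim n)
    with \<open>0 < \<epsilon>\<close> have "lp_dist (M n) N \<le> \<epsilon>/2" by (intro lp_dist_le) auto
    with lp_dist_nonneg[OF assms(1,2)] \<open>0 < \<epsilon>\<close> show ?case by simp
  qed
qed

section \<open>Integrals of bounded Lipschitz functions\<close>

lemma integrable_bounded_continuous:
  fixes f :: "'b::topological_space \<Rightarrow> 'c::{banach, second_countable_topology}"
  assumes "prob_space M" "sets M = sets borel" "continuous_on UNIV f" "\<And>x. norm (f x) \<le> B"
  shows "integrable M f"
proof -
  interpret prob_space M by fact
  have "f \<in> borel_measurable M"
    using borel_measurable_continuous_onI[OF assms(3)] measurable_cong_sets[OF assms(2) refl] by blast
  then show ?thesis by (intro integrable_const_bound[where B=B]) (use assms(4) in auto)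
qed

lemma (in finite_measure) integrable_indicator_finite:
  "A \<in> sets M \<Longrightarrow> integrable M (indicator A :: _ \<Rightarrow> real)"
  by (simp add: less_top[symmetric])

lemma staircase_lower: "min (real K) (t - 1) \<le> (\<Sum>k=1..K. of_bool (real k < t))"
proof (induction K)
  case (Suc K)
  have "(\<Sum>k=1..Suc K. of_bool (real k < t) :: real)
      = (\<Sum>k=1..K. of_bool (real k < t)) + of_bool (real (Suc K) < t)"
    by simp
  with Suc show ?case by (auto simp: min_def of_bool_def split: if_splits)
qed simp

lemma staircase_upper: "(\<Sum>k=1..K. of_bool (real k < t)) \<le> max 0 t"
proof (induction K)
  case (Suc K)
  have "(\<Sum>k=1..K. of_bool (real k < t) :: real) \<le> real K"
    using sum_bounded_above[of "{1..K}" "\<lambda>k. of_bool (real k < t) :: real" 1] by simp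
  moreover have "(\<Sum>k=1..Suc K. of_bool (real k < t) :: real)
      = (\<Sum>k=1..K. of_bool (real k < t)) + of_bool (real (Suc K) < t)"
    by simp
  ultimately show ?case using Suc by (auto simp: of_bool_def split: if_splits)
qed simp

lemma lp_close_superlevel_le:
  fixes F :: "'b::metric_space \<Rightarrow> real"
  assumes Q: "prob_space Q" "sets Q = sets borel"
    and close: "lp_close P Q e" and F: "L-lipschitz_on UNIV F"
  shows "measure P {x. c < F x} \<le> measure Q {x. c < F x + L * e} + e"
proof -
  interpret Q: prob_space Q by fact
  have [measurable]: "F \<in> borel_measurable borel"
    using F by (intro borel_measurable_continuous_onI lipschitz_on_continuous_on)
  have "thick {x. c < F x} e \<subseteq> {x. c < F x + L * e}"
  proof
    fix x assume "x \<in> thick {x. c < F x} e"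
    then obtain y where "c < F y" "dist x y < e" by (auto simp: thick_def)
    moreover have "F y - F x \<le> L * dist x y"
      using lipschitz_onD[OF F, of y x] by (simp add: dist_real_def dist_commute)
    moreover have "L * dist x y \<le> L * e"
      using \<open>dist x y < e\<close> lipschitz_on_nonneg[OF F] by (simp add: mult_left_mono)
    ultimately show "x \<in> {x. c < F x + L * e}" by simp
  qed
  moreover have "{x. c < F x + L * e} \<in> sets Q"
    unfolding Q(2) by measurable
  ultimately have "measure Q (thick {x. c < F x} e) \<le> measure Q {x. c < F x + L * e}"
    by (rule Q.finite_measure_mono)
  moreover have "measure P {x. c < F x} \<le> measure Q (thick {x. c < F x} e) + e"
    using close by (simp add: lp_close_def)
  ultimately show ?thesis by simp
qed

lemma (in prob_space) integral_le_sum_superlevel: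
  fixes F :: "'a \<Rightarrow> real"
  assumes F: "F \<in> borel_measurable M" "\<And>x. 0 \<le> F x \<and> F x \<le> 1"
  shows "real K * integral\<^sup>L M F \<le> 1 + (\<Sum>k=1..K. prob {x\<in>space M. real k < real K * F x})"
proof -
  let ?S = "\<lambda>k. {x\<in>space M. real k < real K * F x}"
  have S: "?S k \<in> events" for k
    using F(1) by measurable
  have int_F: "integrable M F"
    using F by (intro integrable_const_bound[where B=1]) auto
  have int_S: "integrable M (\<lambda>x. \<Sum>k=1..K. indicator (?S k) x :: real)"
    using S by (intro Bochner_Integration.integrable_sum integrable_indicator_finite)
  have "real K * F x \<le> 1 + (\<Sum>k=1..K. indicator (?S k) x)" if "x \<in> space M" for x
  proof -
    have "real K * F x \<le> real K"
      using F(2)[of x] by (simp add: mult_left_le)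
    then have "min (real K) (real K * F x - 1) = real K * F x - 1"
      by (simp add: min_def)
    moreover have "(\<Sum>k=1..K. indicator (?S k) x) = (\<Sum>k=1..K. of_bool (real k < real K * F x) :: real)"
      using that by (intro sum.cong) (auto simp: indicator_def)
    ultimately show ?thesis
      using staircase_lower[of K "real K * F x"] by linarith
  qed
  then have "integral\<^sup>L M (\<lambda>x. real K * F x) \<le> integral\<^sup>L M (\<lambda>x. 1 + (\<Sum>k=1..K. indicator (?S k) x))"
    by (intro integral_mono Bochner_Integration.integrable_add Bochner_Integration.integrable_mult_right
        integrable_const int_F int_S)
  then show ?thesis
    using S
    by (simp add: Bochner_Integration.integral_add[OF integrable_const int_S] prob_space
        Bochner_Integration.integral_sum integrable_indicator_finite sets.Int_space_eq2)
qed

lemma (in prob_space) sum_superlevel_le_integral: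
  fixes g :: "'a \<Rightarrow> real"
  assumes g: "integrable M g" "\<And>x. 0 \<le> g x"
  shows "(\<Sum>k=1..K. prob {x\<in>space M. real k < g x}) \<le> integral\<^sup>L M g"
proof -
  let ?T = "\<lambda>k. {x\<in>space M. real k < g x}"
  have [measurable]: "g \<in> borel_measurable M"
    using g(1) by (rule borel_measurable_integrable)
  have T: "?T k \<in> events" for k
    by measurable
  have "(\<Sum>k=1..K. indicator (?T k) x) \<le> g x" if "x \<in> space M" for x
  proof -
    have "(\<Sum>k=1..K. indicator (?T k) x) = (\<Sum>k=1..K. of_bool (real k < g x) :: real)"
      using that by (intro sum.cong) (auto simp: indicator_def)
    then show ?thesis
      using staircase_upper[where K=K and t="g x"] g(2)[of x] by simp
  qed
  then have "integral\<^sup>L M (\<lambda>x. \<Sum>k=1..K. indicator (?T k) x) \<le> integral\<^sup>L M g"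
    using T by (intro integral_mono Bochner_Integration.integrable_sum integrable_indicator_finite g(1))
  then show ?thesis
    using T by (simp add: Bochner_Integration.integral_sum integrable_indicator_finite sets.Int_space_eq2)
qed

lemma lp_close_integral_le_approx:
  fixes F :: "'b::metric_space \<Rightarrow> real"
  assumes P: "prob_space P" "sets P = sets borel" and Q: "prob_space Q" "sets Q = sets borel"
    and F01: "\<And>x. 0 \<le> F x \<and> F x \<le> 1" and F: "L-lipschitz_on UNIV F"
    and close: "lp_close P Q e" and "0 \<le> e" and "0 < K"
  shows "integral\<^sup>L P F \<le> integral\<^sup>L Q F + (1 + L) * e + 1 / real K"
proof -
  interpret P: prob_space P by fact
  interpret Q: prob_space Q by fact
  have "0 \<le> L" using lipschitz_on_nonneg[OF F] .
  have spaces: "space P = UNIV" "space Q = UNIV"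
    using sets_eq_imp_space_eq[OF P(2)] sets_eq_imp_space_eq[OF Q(2)] by simp_all
  have "F \<in> borel_measurable borel"
    using F by (intro borel_measurable_continuous_onI lipschitz_on_continuous_on)
  then have F_meas: "F \<in> borel_measurable P" "F \<in> borel_measurable Q"
    by (simp_all add: measurable_cong_sets[OF P(2) refl] measurable_cong_sets[OF Q(2) refl])
  then have int_F: "integrable Q (\<lambda>x. real K * F x + real K * L * e)"
    using F01 by (intro Bochner_Integration.integrable_add Bochner_Integration.integrable_mult_right
        Q.integrable_const Q.integrable_const_bound[where B=1]) auto
  have lip_KF: "(real K * L)-lipschitz_on UNIV (\<lambda>x. real K * F x)"
    by (intro lipschitz_on_cmult_real_nonneg F) simp
  have "real K * integral\<^sup>L P F \<le> 1 + (\<Sum>k=1..K. measure P {x. real k < real K * F x})"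
    using P.integral_le_sum_superlevel[OF F_meas(1) F01] by (simp add: spaces)
  also have "\<dots> \<le> 1 + (\<Sum>k=1..K. measure Q {x. real k < real K * F x + real K * L * e} + e)"
    using lp_close_superlevel_le[OF Q close lip_KF] by (intro add_left_mono sum_mono) simp
  also have "\<dots> = 1 + (\<Sum>k=1..K. measure Q {x. real k < real K * F x + real K * L * e}) + real K * e"
    by (simp add: sum.distrib)
  also have "\<dots> \<le> 1 + integral\<^sup>L Q (\<lambda>x. real K * F x + real K * L * e) + real K * e"
    using Q.sum_superlevel_le_integral[OF int_F] F01 \<open>0 \<le> L\<close> \<open>0 \<le> e\<close> by (simp add: spaces)
  also have "\<dots> = 1 + real K * (integral\<^sup>L Q F + (1 + L) * e)"
    using F_meas(2) F01 by (simp add: Q.prob_space algebra_simps Q.integrable_const_bound[where B=1])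
  finally show ?thesis
    using \<open>0 < K\<close> by (simp add: field_simps)
qed

lemma lp_close_integral_le:
  fixes F :: "'b::metric_space \<Rightarrow> real"
  assumes "prob_space P" "sets P = sets borel" "prob_space Q" "sets Q = sets borel"
    and "\<And>x. 0 \<le> F x \<and> F x \<le> 1" "L-lipschitz_on UNIV F"
    and "lp_close P Q e" "0 \<le> e"
  shows "integral\<^sup>L P F \<le> integral\<^sup>L Q F + (1 + L) * e"
proof (rule field_le_epsilon)
  fix \<delta> :: real assume "0 < \<delta>"
  then obtain K where "0 < K" "inverse (real K) < \<delta>"
    using ex_inverse_of_nat_less by blast
  with lp_close_integral_le_approx[OF assms] show "integral\<^sup>L P F \<le> integral\<^sup>L Q F + (1 + L) * e + \<delta>"
    by (smt (verit) inverse_eq_divide)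
qed

lemma lp_dist_tendsto_zero_integral:
  fixes F :: "'b::metric_space \<Rightarrow> real"
  assumes M: "\<And>n. prob_space (M n)" "\<And>n. sets (M n) = sets borel"
    and N: "prob_space N" "sets N = sets borel"
    and F01: "\<And>x. 0 \<le> F x \<and> F x \<le> 1" and F: "L-lipschitz_on UNIV F"
    and lim: "(\<lambda>n. lp_dist (M n) N) \<longlonglongrightarrow> 0"
  shows "(\<lambda>n. integral\<^sup>L (M n) F) \<longlonglongrightarrow> integral\<^sup>L N F"
proof (rule tendstoI)
  fix \<epsilon> :: real assume "0 < \<epsilon>"
  have L: "0 \<le> L" using lipschitz_on_nonneg[OF F] .
  have "\<forall>\<^sub>F n in sequentially. dist (lp_dist (M n) N) 0 < \<epsilon> / (1 + L)"
    using lim \<open>0 < \<epsilon>\<close> L by (intro tendstoD) auto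
  then show "\<forall>\<^sub>F n in sequentially. dist (integral\<^sup>L (M n) F) (integral\<^sup>L N F) < \<epsilon>"
  proof eventually_elim
    case (elim n)
    then have "lp_dist (M n) N < \<epsilon> / (1 + L)" by (simp add: dist_real_def)
    then obtain e where e: "0 < e" "e < \<epsilon> / (1 + L)" "lp_close (M n) N e" "lp_close N (M n) e"
      by (rule lp_dist_lessE[OF M(1) N(1)])
    have "(1 + L) * e < \<epsilon>" using e(2) L by (simp add: field_simps)
    moreover have "integral\<^sup>L (M n) F \<le> integral\<^sup>L N F + (1 + L) * e"
      by (rule lp_close_integral_le[OF M(1,2) N F01 F e(3)]) (use e in simp)
    moreover have "integral\<^sup>L N F \<le> integral\<^sup>L (M n) F + (1 + L) * e"
      by (rule lp_close_integral_le[OF N M(1,2) F01 F e(4)]) (use e in simp)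
    ultimately show ?case by (simp add: dist_real_def abs_less_iff)
  qed
qed

lemma lp_dist_tendsto_zero_integral_bounded:
  fixes F :: "'b::metric_space \<Rightarrow> real"
  assumes M: "\<And>n. prob_space (M n)" "\<And>n. sets (M n) = sets borel"
    and N: "prob_space N" "sets N = sets borel"
    and F_bounded: "\<And>x. \<bar>F x\<bar> \<le> 1" and F: "L-lipschitz_on UNIV F"
    and lim: "(\<lambda>n. lp_dist (M n) N) \<longlonglongrightarrow> 0"
  shows "(\<lambda>n. integral\<^sup>L (M n) F) \<longlonglongrightarrow> integral\<^sup>L N F"
proof -
  have "(L / 2)-lipschitz_on UNIV (\<lambda>x. (F x + 1) / 2)"
    using lipschitz_on_cmult_real_nonneg[OF lipschitz_on_add[OF F lipschitz_on_constant], of "1 / 2"]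
    by (simp add: add_divide_distrib)
  moreover have "0 \<le> (F x + 1) / 2 \<and> (F x + 1) / 2 \<le> 1" for x
    using F_bounded[of x] by (simp add: abs_le_iff)
  ultimately have "(\<lambda>n. integral\<^sup>L (M n) (\<lambda>x. (F x + 1) / 2)) \<longlonglongrightarrow> integral\<^sup>L N (\<lambda>x. (F x + 1) / 2)"
    by (intro lp_dist_tendsto_zero_integral[OF M N _ _ lim])
  moreover have "integral\<^sup>L L (\<lambda>x. (F x + 1) / 2) = (integral\<^sup>L L F + 1) / 2"
    if "prob_space L" "sets L = sets borel" for L
    using that F_bounded lipschitz_on_continuous_on[OF F]
    by (simp add: prob_space.prob_space integrable_bounded_continuous[where B=1])
  ultimately have "(\<lambda>n. (integral\<^sup>L (M n) F + 1) / 2) \<longlonglongrightarrow> (integral\<^sup>L N F + 1) / 2"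
    using M N by simp
  then have "(\<lambda>n. (integral\<^sup>L (M n) F + 1) / 2 * 2 - 1) \<longlonglongrightarrow> (integral\<^sup>L N F + 1) / 2 * 2 - 1"
    by (intro tendsto_diff tendsto_mult_right tendsto_const)
  moreover have cancel: "(a + 1) / 2 * 2 - 1 = a" for a :: real
    by (simp add: field_simps)
  ultimately show ?thesis by (simp only: cancel)
qed

section \<open>Weak convergence on a compact set\<close>

lemma measure_le_integral:
  assumes "finite_measure M" "A \<in> sets M" "integrable M f" "AE x in M. indicator A x \<le> f x"
  shows "measure M A \<le> integral\<^sup>L M f"
proof -
  have "measure M A = integral\<^sup>L M (indicator A)"
    using assms(2) by (simp add: sets.Int_space_eq2)
  also have "\<dots> \<le> integral\<^sup>L M f"
    using assms by (intro integral_mono_AE finite_measure.integrable_indicator_finite)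
  finally show ?thesis .
qed

lemma integral_le_measure:
  assumes "finite_measure M" "B \<in> sets M" "integrable M f" "\<And>x. f x \<le> indicator B x"
  shows "integral\<^sup>L M f \<le> measure M B"
proof -
  have "integral\<^sup>L M f \<le> integral\<^sup>L M (indicator B)"
    using assms by (intro integral_mono finite_measure.integrable_indicator_finite)
  also have "\<dots> = measure M B"
    using assms(2) by (simp add: sets.Int_space_eq2)
  finally show ?thesis .
qed

definition cover_bump :: "'a::metric_space set \<Rightarrow> real \<Rightarrow> 'a \<Rightarrow> real" where
  "cover_bump D e x = max 0 (min 1 (2 - 3 / e * infdist x D))"

lemma cover_bump_nonneg: "0 \<le> cover_bump D e x"
  and cover_bump_le_1: "cover_bump D e x \<le> 1"
  by (auto simp: cover_bump_def)

lemma abs_cover_bump_le_1: "\<bar>cover_bump D e x\<bar> \<le> 1"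
  using cover_bump_nonneg[of D e x] cover_bump_le_1[of D e x] by (simp add: abs_le_iff)

lemma continuous_on_cover_bump: "continuous_on UNIV (cover_bump D e)"
  unfolding cover_bump_def by (intro continuous_intros continuous_on_infdist continuous_on_id)

lemma cover_bump_eq_1:
  assumes "c \<in> D" "dist x c < e / 3"
  shows "cover_bump D e x = 1"
proof -
  have "infdist x D < e / 3" using infdist_le[OF assms(1), of x] assms(2) by linarith
  moreover have "0 < e" using assms(2) zero_le_dist[of x c] by linarith
  ultimately have "3 / e * infdist x D < 1" by (simp add: field_simps)
  then show ?thesis by (simp add: cover_bump_def)
qed

lemma cover_bump_neq_0E:
  assumes "cover_bump D e x \<noteq> 0" "D \<noteq> {}" "0 < e"
  obtains c where "c \<in> D" "dist x c < 2 * e / 3"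
proof -
  have "infdist x D < 2 * e / 3"
    using assms by (auto simp: cover_bump_def field_simps max_def min_def split: if_splits)
  then have "Inf (dist x ` D) < 2 * e / 3" using assms(2) by (simp add: infdist_def)
  then show ?thesis using cInf_lessD[of "dist x ` D"] assms(2) that by blast
qed

lemma indicator_le_cover_bump:
  assumes "x \<in> A \<Longrightarrow> \<exists>c\<in>D. dist x c < e / 3"
  shows "indicator A x \<le> cover_bump D e x"
proof (cases "x \<in> A")
  case True
  then obtain c where "c \<in> D" "dist x c < e / 3" using assms by blast
  then show ?thesis using True by (simp add: cover_bump_eq_1)
qed (simp add: cover_bump_nonneg)

lemma cover_bump_le_indicator_thick:
  assumes "D \<noteq> {}" "0 < e" and near_A: "\<forall>c\<in>D. \<exists>a\<in>A. dist a c < e / 3"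
  shows "cover_bump D e x \<le> indicator (thick A e) x"
proof (cases "cover_bump D e x = 0")
  case False
  then obtain c where "c \<in> D" "dist x c < 2 * e / 3"
    using cover_bump_neq_0E assms(1,2) by blast
  moreover obtain a where "a \<in> A" "dist a c < e / 3"
    using near_A \<open>c \<in> D\<close> by blast
  moreover have "dist x a \<le> dist x c + dist a c"
    using dist_triangle[of x a c] by (simp add: dist_commute)
  ultimately have "dist x a < e"
    by linarith
  with \<open>a \<in> A\<close> have "x \<in> thick A e"
    by (auto simp: thick_def)
  then show ?thesis using cover_bump_le_1 by simp
qed simp

text \<open>The bumps of the subsets of a finite \<open>e/3\<close>-net of \<open>K\<close> interpolate between any Borel set
  and its \<open>e\<close>-thickening, so finitely many integrals control all sets at once.\<close>

lemma lp_close_of_cover_bumps: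
  fixes M N :: "'a::metric_space measure"
  assumes M: "prob_space M" "sets M = sets borel" and N: "prob_space N" "sets N = sets borel"
    and AE: "AE x in M. x \<in> K" and cover: "K \<subseteq> (\<Union>c\<in>C. ball c (e / 3))" and "0 < e"
    and close: "\<And>D. D \<subseteq> C \<Longrightarrow> integral\<^sup>L M (cover_bump D e) \<le> integral\<^sup>L N (cover_bump D e) + e"
  shows "lp_close M N e"
  unfolding lp_close_def
proof
  fix A :: "'a set" assume A: "A \<in> sets borel"
  define D where "D = {c\<in>C. \<exists>a\<in>A \<inter> K. dist a c < e / 3}"
  have bump_integrable: "integrable L (cover_bump D e)" if "prob_space L" "sets L = sets borel" for L
    using that by (intro integrable_bounded_continuous[where B=1] continuous_on_cover_bump)
      (auto simp: abs_cover_bump_le_1)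
  have near_D: "\<exists>c\<in>D. dist x c < e / 3" if "x \<in> A \<inter> K" for x
    using that cover by (force simp: D_def dist_commute)
  show "measure M A \<le> measure N (thick A e) + e"
  proof (cases "D = {}")
    case True
    then have "AE x in M. x \<notin> A" using AE near_D by auto
    then have "A \<in> null_sets M"
      using A M(2) by (simp add: AE_iff_null_sets)
    then show ?thesis using \<open>0 < e\<close> by (simp add: measure_def null_setsD1)
  next
    case False
    have "AE x in M. indicator A x \<le> cover_bump D e x"
      using AE
    proof eventually_elim
      case (elim x)
      then show ?case using near_D by (intro indicator_le_cover_bump) auto
    qed
    then have "measure M A \<le> integral\<^sup>L M (cover_bump D e)"
      using M A by (intro measure_le_integral prob_space.finite_measure bump_integrable) auto
    also have "\<dots> \<le> integral\<^sup>L N (cover_bump D e) + e"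
      by (rule close) (auto simp: D_def)
    also have "integral\<^sup>L N (cover_bump D e) \<le> measure N (thick A e)"
      using False \<open>0 < e\<close> N borel_open[OF open_thick]
      by (intro integral_le_measure prob_space.finite_measure bump_integrable cover_bump_le_indicator_thick)
        (auto simp: D_def)
    finally show ?thesis by simp
  qed
qed

lemma lp_dist_tendsto_zero_of_weak:
  fixes M :: "nat \<Rightarrow> 'a::metric_space measure"
  assumes M: "\<And>n. prob_space (M n)" "\<And>n. sets (M n) = sets borel"
    and N: "prob_space N" "sets N = sets borel"
    and "compact K" and AE_M: "\<And>n. AE x in M n. x \<in> K" and AE_N: "AE x in N. x \<in> K"
    and weak: "\<And>f :: 'a \<Rightarrow> real. continuous_on UNIV f \<Longrightarrow> (\<And>x. \<bar>f x\<bar> \<le> 1) \<Longrightarrow>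
       (\<lambda>n. integral\<^sup>L (M n) f) \<longlonglongrightarrow> integral\<^sup>L N f"
  shows "(\<lambda>n. lp_dist (M n) N) \<longlonglongrightarrow> 0"
proof (rule lp_dist_tendsto_zeroI[OF M(1) N(1)])
  fix e :: real assume "0 < e"
  then obtain C where "C \<subseteq> K" "finite C" and cover: "K \<subseteq> (\<Union>c\<in>C. ball c (e / 3))"
    using compactE_image[OF \<open>compact K\<close>, of K "\<lambda>c. ball c (e / 3)"] by force
  have "(\<lambda>n. integral\<^sup>L (M n) (cover_bump D e)) \<longlonglongrightarrow> integral\<^sup>L N (cover_bump D e)" for D
    by (intro weak continuous_on_cover_bump abs_cover_bump_le_1)
  then have "\<forall>\<^sub>F n in sequentially. \<forall>D\<in>Pow C.
      dist (integral\<^sup>L (M n) (cover_bump D e)) (integral\<^sup>L N (cover_bump D e)) < e"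
    using \<open>finite C\<close> \<open>0 < e\<close> by (intro eventually_ball_finite ballI tendstoD) auto
  then show "\<forall>\<^sub>F n in sequentially. lp_close (M n) N e \<and> lp_close N (M n) e"
  proof eventually_elim
    case (elim n)
    then have close: "\<bar>integral\<^sup>L (M n) (cover_bump D e) - integral\<^sup>L N (cover_bump D e)\<bar> < e"
      if "D \<subseteq> C" for D
      using that by (simp add: dist_real_def)
    have "integral\<^sup>L (M n) (cover_bump D e) \<le> integral\<^sup>L N (cover_bump D e) + e"
        "integral\<^sup>L N (cover_bump D e) \<le> integral\<^sup>L (M n) (cover_bump D e) + e" if "D \<subseteq> C" for D
      using close[OF that] by (simp_all add: abs_less_iff)
    then show ?case
      using lp_close_of_cover_bumps[OF M(1,2) N AE_M cover \<open>0 < e\<close>]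
        lp_close_of_cover_bumps[OF N M(1,2) AE_N cover \<open>0 < e\<close>]
      by blast
  qed
qed

section \<open>Characteristic functions near a point\<close>

lemma integrable_continuous_AE_compact:
  fixes g :: "'b::topological_space \<Rightarrow> 'c::{banach, second_countable_topology}"
  assumes "prob_space M" "sets M = sets borel" "compact K" "AE x in M. x \<in> K"
    and g: "continuous_on UNIV g"
  shows "integrable M g"
proof -
  interpret prob_space M by fact
  have "bounded (g ` K)"
    using \<open>compact K\<close> by (intro compact_imp_bounded compact_continuous_image continuous_on_subset[OF g]) auto
  then obtain B where "\<forall>x\<in>K. norm (g x) \<le> B" by (auto simp: bounded_iff)
  moreover have "g \<in> borel_measurable M"
    using borel_measurable_continuous_onI[OF g] measurable_cong_sets[OF assms(2) refl] by blast
  ultimately show ?thesis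
    using assms(4) by (intro integrable_const_bound[where B=B]) (auto elim!: AE_mp)
qed

lemma dist_integrals_le:
  fixes g h :: "'b \<Rightarrow> 'c::{banach, second_countable_topology}"
  assumes "prob_space M" "integrable M g" "integrable M h" "AE x in M. dist (g x) (h x) \<le> e"
  shows "dist (integral\<^sup>L M g) (integral\<^sup>L M h) \<le> e"
proof -
  interpret prob_space M by fact
  have "dist (integral\<^sup>L M g) (integral\<^sup>L M h) = norm (integral\<^sup>L M (\<lambda>x. g x - h x))"
    using assms(2,3) by (simp add: dist_norm)
  also have "\<dots> \<le> integral\<^sup>L M (\<lambda>x. norm (g x - h x))" by (rule integral_norm_bound)
  also have "\<dots> \<le> integral\<^sup>L M (\<lambda>x. e)"
    using assms(2-4) by (intro integral_mono_AE) (auto simp: dist_norm)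
  finally show ?thesis by (simp add: prob_space)
qed

lemma norm_iexp_diff_quotient_le:
  assumes "0 < h"
  shows "cmod (complex_of_real s - (iexp (h * s) - 1) / (\<i> * h)) \<le> h * s\<^sup>2 / 2"
proof -
  have "complex_of_real s - (iexp (h * s) - 1) / (\<i> * h)
      = - (iexp (h * s) - (1 + \<i> * (h * s))) / (\<i> * h)"
    using assms by (simp add: field_simps)
  then have "cmod (complex_of_real s - (iexp (h * s) - 1) / (\<i> * h))
      = cmod (iexp (h * s) - (1 + \<i> * (h * s))) / h"
    using assms by (simp add: norm_divide norm_mult norm_minus_commute)
  also have "\<dots> \<le> (h * s)\<^sup>2 / 2 / h"
    using iexp_approx1[of "h * s" 1] assms by (intro divide_right_mono) (simp_all add: power2_abs power2_eq_square)
  also have "\<dots> = h * s\<^sup>2 / 2"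
    using assms by (simp add: power2_eq_square)
  finally show ?thesis .
qed

lemma dist_inner_tilt_diff_quotient_le:
  assumes "0 < h" "norm b \<le> R"
  shows "dist (complex_of_real (b \<bullet> w) * c * iexp (x \<bullet> b))
      (1 / (\<i> * h) * (c * iexp ((x + h *\<^sub>R w) \<bullet> b)) + (- 1 / (\<i> * h)) * (c * iexp (x \<bullet> b)))
    \<le> norm c * (h * (R * norm w)\<^sup>2 / 2)"
    (is "dist ?f ?q \<le> _")
proof -
  have "\<bar>b \<bullet> w\<bar> \<le> norm b * norm w" by (rule Cauchy_Schwarz_ineq2)
  also have "\<dots> \<le> R * norm w" using assms(2) by (intro mult_right_mono) auto
  finally have sq: "(b \<bullet> w)\<^sup>2 \<le> (R * norm w)\<^sup>2"
    by (metis abs_ge_zero power2_abs power_mono)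
  have "?q = c * iexp (x \<bullet> b) * ((iexp (h * (b \<bullet> w)) - 1) / (\<i> * h))"
    using assms(1) by (simp add: field_simps inner_add_left inner_commute[of w] exp_add
        distrib_left mult.commute)
  then have "?f - ?q = c * iexp (x \<bullet> b) * (complex_of_real (b \<bullet> w) - (iexp (h * (b \<bullet> w)) - 1) / (\<i> * h))"
    by (simp only:) (simp add: algebra_simps)
  then have "dist ?f ?q = norm c * cmod (complex_of_real (b \<bullet> w) - (iexp (h * (b \<bullet> w)) - 1) / (\<i> * h))"
    by (simp add: dist_norm norm_mult)
  also have "\<dots> \<le> norm c * (h * (R * norm w)\<^sup>2 / 2)"
    using assms(1) sq
    by (intro mult_left_mono order_trans[OF norm_iexp_diff_quotient_le]) (auto simp: divide_right_mono)
  finally show ?thesis .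
qed

lemma bounded_linear_real_eq_inner:
  fixes f :: "'a::euclidean_space \<Rightarrow> real"
  assumes "bounded_linear f"
  shows "f b = b \<bullet> (\<Sum>i\<in>Basis. f i *\<^sub>R i)"
proof -
  have "f b \<bullet> 1 = (\<Sum>i\<in>Basis. (b \<bullet> i) * (f i \<bullet> 1))"
    by (rule Linear_Algebra.linear_componentwise) (use assms bounded_linear.linear in blast)
  then show ?thesis by (simp add: inner_sum_right mult.commute)
qed

locale ball_supported_sequence =
  fixes G :: "nat \<Rightarrow> 'a::euclidean_space measure" and Gstar :: "'a measure" and R :: real
  assumes prob_G: "\<And>n. prob_space (G n)" and sets_G: "\<And>n. sets (G n) = sets borel"
    and prob_Gstar: "prob_space Gstar" and sets_Gstar: "sets Gstar = sets borel"
    and AE_G: "\<And>n. AE b in G n. b \<in> cball 0 R" and AE_Gstar: "AE b in Gstar. b \<in> cball 0 R"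
begin

definition integrals_converge :: "('a \<Rightarrow> complex) \<Rightarrow> bool" where
  "integrals_converge g \<longleftrightarrow> (\<lambda>n. integral\<^sup>L (G n) g) \<longlonglongrightarrow> integral\<^sup>L Gstar g"

lemma integrable_G: "continuous_on UNIV g \<Longrightarrow> integrable (G n) g"
  and integrable_Gstar: "continuous_on UNIV g \<Longrightarrow> integrable Gstar g"
  for g :: "'a \<Rightarrow> 'b::{banach, second_countable_topology}"
  using integrable_continuous_AE_compact[OF prob_G sets_G compact_cball AE_G]
    integrable_continuous_AE_compact[OF prob_Gstar sets_Gstar compact_cball AE_Gstar] by blast+

lemma integrals_converge_lincomb:
  assumes "continuous_on UNIV g1" "continuous_on UNIV g2" "integrals_converge g1" "integrals_converge g2"
  shows "integrals_converge (\<lambda>b. a * g1 b + c * g2 b)"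
  using assms unfolding integrals_converge_def
  by (simp add: integrable_G integrable_Gstar) (intro tendsto_intros)

lemma integrals_converge_uniform_limit:
  assumes g: "continuous_on UNIV g"
    and approx: "\<And>e. 0 < e \<Longrightarrow> \<exists>h. continuous_on UNIV h \<and> integrals_converge h \<and>
                       (\<forall>b\<in>cball 0 R. dist (g b) (h b) \<le> e)"
  shows "integrals_converge g"
  unfolding integrals_converge_def
proof (rule tendstoI)
  fix e :: real assume "0 < e"
  then obtain h where h: "continuous_on UNIV h" "integrals_converge h"
      and close: "\<forall>b\<in>cball 0 R. dist (g b) (h b) \<le> e / 3"
    using approx[of "e / 3"] by auto
  have "\<forall>\<^sub>F n in sequentially. dist (integral\<^sup>L (G n) h) (integral\<^sup>L Gstar h) < e / 3"
    using h(2) \<open>0 < e\<close> unfolding integrals_converge_def by (intro tendstoD) auto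
  then show "\<forall>\<^sub>F n in sequentially. dist (integral\<^sup>L (G n) g) (integral\<^sup>L Gstar g) < e"
  proof eventually_elim
    case (elim n)
    have "dist (integral\<^sup>L (G n) g) (integral\<^sup>L (G n) h) \<le> e / 3"
      using AE_G[of n] close
      by (intro dist_integrals_le prob_G integrable_G g h(1)) (auto elim!: AE_mp)
    moreover have "dist (integral\<^sup>L Gstar g) (integral\<^sup>L Gstar h) \<le> e / 3"
      using AE_Gstar close
      by (intro dist_integrals_le prob_Gstar integrable_Gstar g h(1)) (auto elim!: AE_mp)
    ultimately show ?case
      using elim dist_triangle[of "integral\<^sup>L (G n) g" "integral\<^sup>L Gstar g" "integral\<^sup>L (G n) h"]
        dist_triangle[of "integral\<^sup>L (G n) h" "integral\<^sup>L Gstar g" "integral\<^sup>L Gstar h"]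
      by (simp add: dist_commute)
  qed
qed

text \<open>Once it contains \<open>1\<close>, this class is closed under multiplication by polynomials, so
  by Stone--Weierstrass it contains every continuous function.\<close>

definition tilts_converge_near :: "'a \<Rightarrow> ('a \<Rightarrow> complex) \<Rightarrow> bool" where
  "tilts_converge_near x0 g \<longleftrightarrow> continuous_on UNIV g \<and>
     (\<exists>\<rho>>0. \<forall>x\<in>ball x0 \<rho>. integrals_converge (\<lambda>b. g b * iexp (x \<bullet> b)))"

lemma tilts_converge_near_lincomb:
  assumes "tilts_converge_near x0 g1" "tilts_converge_near x0 g2"
  shows "tilts_converge_near x0 (\<lambda>b. a * g1 b + c * g2 b)"
proof -
  obtain \<rho>1 \<rho>2 where "0 < \<rho>1" "0 < \<rho>2" and cont: "continuous_on UNIV g1" "continuous_on UNIV g2"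
    and conv1: "\<forall>x\<in>ball x0 \<rho>1. integrals_converge (\<lambda>b. g1 b * iexp (x \<bullet> b))"
    and conv2: "\<forall>x\<in>ball x0 \<rho>2. integrals_converge (\<lambda>b. g2 b * iexp (x \<bullet> b))"
    using assms by (auto simp: tilts_converge_near_def)
  have "integrals_converge (\<lambda>b. (a * g1 b + c * g2 b) * iexp (x \<bullet> b))"
    if "x \<in> ball x0 (min \<rho>1 \<rho>2)" for x
  proof -
    have "integrals_converge (\<lambda>b. a * (g1 b * iexp (x \<bullet> b)) + c * (g2 b * iexp (x \<bullet> b)))"
      using conv1 conv2 that cont by (intro integrals_converge_lincomb continuous_intros) auto
    then show ?thesis by (simp add: algebra_simps)
  qed
  with cont \<open>0 < \<rho>1\<close> \<open>0 < \<rho>2\<close> show ?thesis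
    unfolding tilts_converge_near_def by (auto intro!: continuous_intros exI[of _ "min \<rho>1 \<rho>2"])
qed

text \<open>Multiplying \<open>g\<close> by \<open>b \<bullet> w\<close> differentiates the tilt in direction \<open>w\<close>; the derivative is
  the uniform limit on the ball of difference quotients, which are combinations of tilts.\<close>

lemma tilts_converge_near_inner:
  assumes "tilts_converge_near x0 g"
  shows "tilts_converge_near x0 (\<lambda>b. complex_of_real (b \<bullet> w) * g b)"
proof -
  obtain \<rho> where g: "continuous_on UNIV g" and "0 < \<rho>"
    and conv: "\<forall>x\<in>ball x0 \<rho>. integrals_converge (\<lambda>b. g b * iexp (x \<bullet> b))"
    using assms by (auto simp: tilts_converge_near_def)
  have "bounded (g ` cball 0 R)"
    by (intro compact_imp_bounded compact_continuous_image continuous_on_subset[OF g]) auto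
  then obtain B where B: "\<forall>b\<in>cball 0 R. norm (g b) \<le> B"
    by (auto simp: bounded_iff)
  define C where "C = B * (R * norm w)\<^sup>2 / 2"
  have "integrals_converge (\<lambda>b. complex_of_real (b \<bullet> w) * g b * iexp (x \<bullet> b))"
    if x: "x \<in> ball x0 (\<rho> / 2)" for x
  proof (rule integrals_converge_uniform_limit)
    fix e :: real assume "0 < e"
    have "\<forall>\<^sub>F h in at_right 0. 0 < h \<and> h * norm w < \<rho> / 2 \<and> h * C < e"
      using \<open>0 < \<rho>\<close> \<open>0 < e\<close>
      by (intro eventually_conj eventually_at_right_less order_tendstoD(2)) (auto intro!: tendsto_eq_intros)
    then obtain h where "0 < h" "h * norm w < \<rho> / 2" "h * C < e"
      using eventually_happens'[OF trivial_limit_at_right_real] by blast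
    then have "x + h *\<^sub>R w \<in> ball x0 \<rho>"
      using x dist_triangle[of x0 "x + h *\<^sub>R w" x] \<open>0 < h\<close> by (simp add: dist_norm)
    moreover have "x \<in> ball x0 \<rho>" using x \<open>0 < \<rho>\<close> by simp
    ultimately have q_conv: "integrals_converge (\<lambda>b. 1 / (\<i> * h) * (g b * iexp ((x + h *\<^sub>R w) \<bullet> b))
        + (- 1 / (\<i> * h)) * (g b * iexp (x \<bullet> b)))" (is "integrals_converge ?q")
      using conv g by (intro integrals_converge_lincomb continuous_intros) auto
    have q_close: "dist (complex_of_real (b \<bullet> w) * g b * iexp (x \<bullet> b)) (?q b) \<le> e"
      if "b \<in> cball 0 R" for b
    proof -
      have "dist (complex_of_real (b \<bullet> w) * g b * iexp (x \<bullet> b)) (?q b)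
          \<le> norm (g b) * (h * (R * norm w)\<^sup>2 / 2)"
        using that \<open>0 < h\<close> by (intro dist_inner_tilt_diff_quotient_le) auto
      also have "\<dots> \<le> B * (h * (R * norm w)\<^sup>2 / 2)"
        using B that \<open>0 < h\<close> by (intro mult_right_mono) auto
      also have "\<dots> = h * C" by (simp add: C_def)
      finally show ?thesis using \<open>h * C < e\<close> by simp
    qed
    show "\<exists>q. continuous_on UNIV q \<and> integrals_converge q \<and>
        (\<forall>b\<in>cball 0 R. dist (complex_of_real (b \<bullet> w) * g b * iexp (x \<bullet> b)) (q b) \<le> e)"
    proof (intro exI conjI ballI)
      show "continuous_on UNIV ?q" using g by (intro continuous_intros) auto
    qed (use q_conv q_close in auto)
  qed (use g in \<open>auto intro!: continuous_intros\<close>)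
  with g \<open>0 < \<rho>\<close> show ?thesis
    unfolding tilts_converge_near_def by (auto intro!: continuous_intros exI[of _ "\<rho> / 2"])
qed

lemma tilts_converge_near_real_polynomial:
  assumes "real_polynomial_function p" "tilts_converge_near x0 g"
  shows "tilts_converge_near x0 (\<lambda>b. complex_of_real (p b) * g b)"
  using assms
proof (induction p arbitrary: g rule: real_polynomial_function.induct)
  case (linear f)
  show ?case
    using tilts_converge_near_inner[OF linear.prems, of "\<Sum>i\<in>Basis. f i *\<^sub>R i"]
    by (simp add: bounded_linear_real_eq_inner[OF linear.hyps, symmetric])
next
  case (const c)
  show ?case
    using tilts_converge_near_lincomb[OF const const, of c 0] by simp
next
  case (add f1 f2)
  show ?case
    using tilts_converge_near_lincomb[OF add.IH(1)[OF add.prems] add.IH(2)[OF add.prems], of 1 1]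
    by (simp add: algebra_simps)
next
  case (mult f1 f2)
  show ?case
    using mult.IH(1)[OF mult.IH(2)[OF mult.prems]] by (simp add: algebra_simps)
qed

lemma tilts_converge_near_polynomial:
  assumes "polynomial_function p" "tilts_converge_near x0 g"
  shows "tilts_converge_near x0 (\<lambda>b. p b * g b)"
proof -
  have "real_polynomial_function (\<lambda>b. Re (p b))" "real_polynomial_function (\<lambda>b. Im (p b))"
    using assms(1) bounded_linear_Re bounded_linear_Im unfolding polynomial_function_def o_def by blast+
  then have "tilts_converge_near x0
      (\<lambda>b. 1 * (complex_of_real (Re (p b)) * g b) + \<i> * (complex_of_real (Im (p b)) * g b))"
    using assms(2) by (intro tilts_converge_near_lincomb tilts_converge_near_real_polynomial)
  moreover have "1 * (complex_of_real (Re (p b)) * g b) + \<i> * (complex_of_real (Im (p b)) * g b)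
      = p b * g b" for b
  proof -
    have "p b * g b = (complex_of_real (Re (p b)) + \<i> * complex_of_real (Im (p b))) * g b"
      by (metis complex_eq)
    then show ?thesis by (simp add: algebra_simps)
  qed
  ultimately show ?thesis by simp
qed

lemma tendsto_integral_of_char_near:
  assumes "0 < r" and char: "\<And>x. x \<in> ball x0 r \<Longrightarrow> integrals_converge (\<lambda>b. iexp (x \<bullet> b))"
    and f: "continuous_on UNIV (f :: 'a \<Rightarrow> real)"
  shows "(\<lambda>n. integral\<^sup>L (G n) f) \<longlonglongrightarrow> integral\<^sup>L Gstar f"
proof -
  have one: "tilts_converge_near x0 (\<lambda>b. 1)"
    unfolding tilts_converge_near_def using \<open>0 < r\<close> char by auto
  have "integrals_converge (\<lambda>b. complex_of_real (f b))"
  proof (rule integrals_converge_uniform_limit)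
    fix e :: real assume "0 < e"
    have "continuous_on (cball 0 R) (\<lambda>b. complex_of_real (f b) * iexp (- (x0 \<bullet> b)))"
      by (intro continuous_intros continuous_on_subset[OF f]) auto
    then obtain p where p: "polynomial_function p"
      and approx: "\<forall>b\<in>cball 0 R. norm (complex_of_real (f b) * iexp (- (x0 \<bullet> b)) - p b) < e"
      using Stone_Weierstrass_polynomial_function[OF compact_cball _ \<open>0 < e\<close>] by blast
    have "tilts_converge_near x0 (\<lambda>b. p b * 1)"
      by (rule tilts_converge_near_polynomial[OF p one])
    then have "integrals_converge (\<lambda>b. p b * iexp (x0 \<bullet> b))"
      by (auto simp: tilts_converge_near_def)
    moreover have "dist (complex_of_real (f b)) (p b * iexp (x0 \<bullet> b)) \<le> e" if "b \<in> cball 0 R" for b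
    proof -
      have "complex_of_real (f b) - p b * iexp (x0 \<bullet> b)
          = (complex_of_real (f b) * iexp (- (x0 \<bullet> b)) - p b) * iexp (x0 \<bullet> b)"
        by (simp add: algebra_simps exp_minus_inverse exp_minus)
      then show ?thesis
        using approx that by (simp add: dist_norm norm_mult less_imp_le)
    qed
    ultimately show "\<exists>h. continuous_on UNIV h \<and> integrals_converge h \<and>
        (\<forall>b\<in>cball 0 R. dist (complex_of_real (f b)) (h b) \<le> e)"
      using continuous_on_polymonial_function[OF p]
      by (intro exI[of _ "\<lambda>b. p b * iexp (x0 \<bullet> b)"]) (auto intro!: continuous_intros)
  qed (use f in \<open>auto intro!: continuous_intros\<close>)
  then show ?thesis
    by (simp add: integrals_converge_def tendsto_of_real_iff)
qed

end

section \<open>The linear model\<close>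

lemma prob_space_std_normal: "prob_space std_normal"
  unfolding std_normal_def by (rule prob_space_normal_density) simp

lemma sets_std_normal: "sets std_normal = sets borel"
  by (simp add: std_normal_def)

lemma integral_cos_std_normal: "(\<integral>z. cos (a + t * z) \<partial>std_normal) = exp (- t\<^sup>2 / 2) * cos a"
proof -
  have "integrable std_normal (\<lambda>z. iexp (a + t * z))"
    by (intro integrable_bounded_continuous[where B=1] prob_space_std_normal sets_std_normal
        continuous_intros) simp
  then have "(\<integral>z. cos (a + t * z) \<partial>std_normal) = Re (CLINT z|std_normal. iexp (a + t * z))"
    by (simp add: Re_exp integral_Re[symmetric])
  also have "(CLINT z|std_normal. iexp (a + t * z)) = iexp a * char std_normal_distribution t"
    by (simp add: char_def std_normal_def distrib_left exp_add)
  finally show ?thesis by (simp add: char_std_normal_distribution Re_exp)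
qed

lemma sets_pair_measure_borel:
  assumes "sets M1 = sets (borel :: 'b::second_countable_topology measure)"
    "sets M2 = sets (borel :: 'c::second_countable_topology measure)"
  shows "sets (M1 \<Otimes>\<^sub>M M2) = sets (borel :: ('b \<times> 'c) measure)"
  using sets_pair_measure_cong[OF assms] by (simp only: borel_prod)

definition lin_obs :: "real \<Rightarrow> ('a::euclidean_space \<times> 'a) \<times> real \<Rightarrow> 'a \<times> real" where
  "lin_obs \<sigma> w = (fst (fst w), fst (fst w) \<bullet> snd (fst w) + \<sigma> * snd w)"

lemma lin_model_lin_obs: "lin_model \<sigma> G \<mu> = distr ((\<mu> \<Otimes>\<^sub>M G) \<Otimes>\<^sub>M std_normal) borel (lin_obs \<sigma>)"
proof -
  have obs: "(\<lambda>((x, b), z). (x, x \<bullet> b + \<sigma> * z)) = lin_obs \<sigma>"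
    by (auto simp: lin_obs_def fun_eq_iff)
  show ?thesis by (simp only: lin_model_def obs)
qed

lemma continuous_on_lin_obs: "continuous_on UNIV (lin_obs \<sigma>)"
  unfolding lin_obs_def by (intro continuous_intros)

context
  fixes \<mu> G :: "'a::euclidean_space measure"
  assumes \<mu>: "prob_space \<mu>" "sets \<mu> = sets borel" and G: "prob_space G" "sets G = sets borel"
begin

lemma prob_space_noise_product: "prob_space ((\<mu> \<Otimes>\<^sub>M G) \<Otimes>\<^sub>M std_normal)"
  by (intro prob_space_pair \<mu> G prob_space_std_normal)

lemma sets_noise_product: "sets ((\<mu> \<Otimes>\<^sub>M G) \<Otimes>\<^sub>M std_normal) = sets borel"
  by (intro sets_pair_measure_borel \<mu> G sets_std_normal)

lemma measurable_lin_obs: "lin_obs \<sigma> \<in> measurable ((\<mu> \<Otimes>\<^sub>M G) \<Otimes>\<^sub>M std_normal) borel"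
  using borel_measurable_continuous_onI[OF continuous_on_lin_obs]
    measurable_cong_sets[OF sets_noise_product refl] by blast

lemma prob_space_lin_model: "prob_space (lin_model \<sigma> G \<mu>)"
  unfolding lin_model_lin_obs
  by (rule prob_space.prob_space_distr[OF prob_space_noise_product measurable_lin_obs])

lemma sets_lin_model: "sets (lin_model \<sigma> G \<mu>) = sets borel"
  unfolding lin_model_lin_obs by simp

end

definition cos_transform :: "'a::euclidean_space measure \<Rightarrow> real \<Rightarrow> 'a \<Rightarrow> real" where
  "cos_transform G \<theta> x = (\<integral>b. cos (x \<bullet> b + \<theta>) \<partial>G)"

lemma integral_lin_model_cos:
  fixes \<mu> G :: "'a::euclidean_space measure" and \<phi> :: "'a \<Rightarrow> real"
  assumes \<mu>: "prob_space \<mu>" "sets \<mu> = sets borel" and G: "prob_space G" "sets G = sets borel"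
    and \<phi>: "continuous_on UNIV \<phi>" "\<And>x. \<bar>\<phi> x\<bar> \<le> 1"
  shows "(\<integral>p. \<phi> (fst p) * cos (snd p + \<theta>) \<partial>lin_model \<sigma> G \<mu>) =
     exp (- \<sigma>\<^sup>2 / 2) * (\<integral>x. \<phi> x * cos_transform G \<theta> x \<partial>\<mu>)"
proof -
  interpret \<mu>G: pair_prob_space \<mu> G by (intro pair_prob_space.intro pair_sigma_finite.intro
      prob_space_imp_sigma_finite \<mu> G)
  interpret noise: pair_prob_space "\<mu> \<Otimes>\<^sub>M G" std_normal
    by (intro pair_prob_space.intro pair_sigma_finite.intro prob_space_imp_sigma_finite
        prob_space_pair \<mu> G prob_space_std_normal)
  define F where "F p = \<phi> (fst p) * cos (snd p + \<theta>)" for p :: "'a \<times> real"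
  have F: "continuous_on UNIV F"
    unfolding F_def by (intro continuous_intros continuous_on_compose2[OF \<phi>(1)]) auto
  have bounded: "norm (\<phi> x * cos y) \<le> 1" for x y
    using \<phi>(2)[of x] by (simp add: abs_mult mult_le_one)
  have "(\<integral>p. F p \<partial>lin_model \<sigma> G \<mu>) = (\<integral>w. F (lin_obs \<sigma> w) \<partial>(\<mu> \<Otimes>\<^sub>M G) \<Otimes>\<^sub>M std_normal)"
    unfolding lin_model_lin_obs
    by (rule integral_distr[OF measurable_lin_obs[OF \<mu> G] borel_measurable_continuous_onI[OF F]])
  also have "\<dots> = (\<integral>xb. (\<integral>z. F (lin_obs \<sigma> (xb, z)) \<partial>std_normal) \<partial>\<mu> \<Otimes>\<^sub>M G)"
  proof -
    have "integrable ((\<mu> \<Otimes>\<^sub>M G) \<Otimes>\<^sub>M std_normal) (\<lambda>w. F (lin_obs \<sigma> w))"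
      using bounded
      by (intro integrable_bounded_continuous[where B=1] prob_space_noise_product sets_noise_product
          \<mu> G continuous_on_compose2[OF F continuous_on_lin_obs]) (auto simp: F_def)
    then show ?thesis by (rule noise.integral_fst'[symmetric])
  qed
  also have "\<dots> = (\<integral>xb. exp (- \<sigma>\<^sup>2 / 2) * (\<phi> (fst xb) * cos (fst xb \<bullet> snd xb + \<theta>)) \<partial>\<mu> \<Otimes>\<^sub>M G)"
  proof (rule Bochner_Integration.integral_cong[OF refl])
    fix xb :: "'a \<times> 'a"
    have "(\<integral>z. F (lin_obs \<sigma> (xb, z)) \<partial>std_normal)
        = \<phi> (fst xb) * (\<integral>z. cos ((fst xb \<bullet> snd xb + \<theta>) + \<sigma> * z) \<partial>std_normal)"
      by (simp add: F_def lin_obs_def algebra_simps)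
    then show "(\<integral>z. F (lin_obs \<sigma> (xb, z)) \<partial>std_normal)
        = exp (- \<sigma>\<^sup>2 / 2) * (\<phi> (fst xb) * cos (fst xb \<bullet> snd xb + \<theta>))"
      by (simp add: integral_cos_std_normal)
  qed
  also have "\<dots> = exp (- \<sigma>\<^sup>2 / 2) * (\<integral>xb. \<phi> (fst xb) * cos (fst xb \<bullet> snd xb + \<theta>) \<partial>\<mu> \<Otimes>\<^sub>M G)"
    by (rule integral_mult_right_zero)
  also have "(\<integral>xb. \<phi> (fst xb) * cos (fst xb \<bullet> snd xb + \<theta>) \<partial>\<mu> \<Otimes>\<^sub>M G)
      = (\<integral>x. (\<integral>b. \<phi> x * cos (x \<bullet> b + \<theta>) \<partial>G) \<partial>\<mu>)"
  proof -
    have "integrable (\<mu> \<Otimes>\<^sub>M G) (\<lambda>xb. \<phi> (fst xb) * cos (fst xb \<bullet> snd xb + \<theta>))"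
      using bounded
      by (intro integrable_bounded_continuous[where B=1] prob_space_pair sets_pair_measure_borel
          \<mu> G continuous_intros continuous_on_compose2[OF \<phi>(1)]) auto
    from \<mu>G.integral_fst'[OF this] show ?thesis by simp
  qed
  finally show ?thesis
    by (simp add: F_def cos_transform_def)
qed

lemma abs_cos_diff_le: "\<bar>cos u - cos v\<bar> \<le> \<bar>u - v\<bar>" for u v :: real
proof -
  have "\<bar>cos u - cos v\<bar> = 2 * \<bar>sin ((u + v) / 2)\<bar> * \<bar>sin ((v - u) / 2)\<bar>"
    by (simp add: cos_diff_cos abs_mult)
  also have "\<dots> \<le> 2 * 1 * \<bar>(v - u) / 2\<bar>"
    by (intro mult_mono abs_sin_x_le_abs_x) auto
  finally show ?thesis by simp
qed

lemma abs_cos_transform_le_1: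
  assumes "prob_space G" "sets G = sets borel"
  shows "\<bar>cos_transform G \<theta> x\<bar> \<le> 1"
proof -
  interpret prob_space G by fact
  have "\<bar>cos_transform G \<theta> x\<bar> \<le> (\<integral>b. \<bar>cos (x \<bullet> b + \<theta>)\<bar> \<partial>G)"
    unfolding cos_transform_def using integral_norm_bound[of G] by simp
  also have "\<dots> \<le> (\<integral>b. 1 \<partial>G)"
    using assms by (intro integral_mono integrable_bounded_continuous[where B=1] continuous_intros) auto
  finally show ?thesis by (simp add: prob_space)
qed

lemma lipschitz_cos_transform:
  assumes G: "prob_space G" "sets G = sets borel" and AE: "AE b in G. b \<in> cball 0 R" and "0 \<le> R"
  shows "R-lipschitz_on UNIV (cos_transform G \<theta>)"
proof (rule lipschitz_onI)
  fix x y :: 'a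
  have "\<bar>cos (x \<bullet> b + \<theta>) - cos (y \<bullet> b + \<theta>)\<bar> \<le> R * dist x y" if "b \<in> cball 0 R" for b
  proof -
    have "\<bar>cos (x \<bullet> b + \<theta>) - cos (y \<bullet> b + \<theta>)\<bar> \<le> \<bar>(x - y) \<bullet> b\<bar>"
      using abs_cos_diff_le[of "x \<bullet> b + \<theta>" "y \<bullet> b + \<theta>"] by (simp add: inner_diff_left)
    also have "\<dots> \<le> norm (x - y) * norm b" by (rule Cauchy_Schwarz_ineq2)
    also have "\<dots> \<le> norm (x - y) * R" using that by (intro mult_left_mono) auto
    finally show ?thesis by (simp add: dist_norm mult.commute)
  qed
  then show "dist (cos_transform G \<theta> x) (cos_transform G \<theta> y) \<le> R * dist x y"
    unfolding cos_transform_def using AE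
    by (intro dist_integrals_le G(1) integrable_bounded_continuous[where B=1] G continuous_intros)
      (auto simp: dist_real_def elim!: AE_mp)
qed (fact \<open>0 \<le> R\<close>)

lemma char_eq_cos_transform:
  assumes "prob_space G" "sets G = sets borel"
  shows "(CLINT b|G. iexp (x \<bullet> b)) = cos_transform G 0 x + \<i> * cos_transform G (- (pi / 2)) x"
proof -
  have int: "integrable G (\<lambda>b. complex_of_real (cos (x \<bullet> b + \<theta>)))" for \<theta>
    using assms by (intro integrable_bounded_continuous[where B=1] continuous_intros) auto
  have "iexp (x \<bullet> b) = complex_of_real (cos (x \<bullet> b + 0)) + \<i> * complex_of_real (cos (x \<bullet> b + - (pi / 2)))"
    for b
    by (simp add: cos_diff Complex_eq exp_Euler cis.ctr cos_of_real sin_of_real)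
  then have "(CLINT b|G. iexp (x \<bullet> b)) = (CLINT b|G. complex_of_real (cos (x \<bullet> b + 0)))
      + (CLINT b|G. \<i> * complex_of_real (cos (x \<bullet> b + - (pi / 2))))"
    by (simp only: Bochner_Integration.integral_add[OF int integrable_mult_right[OF int]])
  then show ?thesis by (simp add: cos_transform_def)
qed

lemma lipschitz_on_mult_cos:
  fixes \<phi> :: "'a::metric_space \<Rightarrow> real"
  assumes \<phi>: "K-lipschitz_on UNIV \<phi>" "\<And>x. \<bar>\<phi> x\<bar> \<le> 1"
  shows "(K + 1)-lipschitz_on UNIV (\<lambda>p. \<phi> (fst p) * cos (snd p + \<theta>))"
proof (rule lipschitz_onI)
  fix p q :: "'a \<times> real"
  have "\<bar>(\<phi> (fst p) - \<phi> (fst q)) * cos (snd p + \<theta>)\<bar> \<le> K * dist p q"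
  proof -
    have "\<bar>(\<phi> (fst p) - \<phi> (fst q)) * cos (snd p + \<theta>)\<bar> \<le> \<bar>\<phi> (fst p) - \<phi> (fst q)\<bar>"
      by (simp add: abs_mult mult_left_le)
    also have "\<dots> \<le> K * dist (fst p) (fst q)"
      using lipschitz_onD[OF \<phi>(1)] by (simp add: dist_real_def)
    also have "\<dots> \<le> K * dist p q"
      by (intro mult_left_mono dist_fst_le lipschitz_on_nonneg[OF \<phi>(1)])
    finally show ?thesis .
  qed
  moreover have "\<bar>\<phi> (fst q) * (cos (snd p + \<theta>) - cos (snd q + \<theta>))\<bar> \<le> dist p q"
  proof -
    have "\<bar>\<phi> (fst q) * (cos (snd p + \<theta>) - cos (snd q + \<theta>))\<bar> \<le> \<bar>cos (snd p + \<theta>) - cos (snd q + \<theta>)\<bar>"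
      using \<phi>(2) by (simp add: abs_mult mult_left_le_one_le)
    also have "\<dots> \<le> dist (snd p) (snd q)"
      using abs_cos_diff_le[of "snd p + \<theta>" "snd q + \<theta>"] by (simp add: dist_real_def)
    also have "\<dots> \<le> dist p q" by (rule dist_snd_le)
    finally show ?thesis .
  qed
  moreover have "\<phi> (fst p) * cos (snd p + \<theta>) - \<phi> (fst q) * cos (snd q + \<theta>) =
     (\<phi> (fst p) - \<phi> (fst q)) * cos (snd p + \<theta>) + \<phi> (fst q) * (cos (snd p + \<theta>) - cos (snd q + \<theta>))"
    by (simp add: algebra_simps)
  ultimately show "dist (\<phi> (fst p) * cos (snd p + \<theta>)) (\<phi> (fst q) * cos (snd q + \<theta>)) \<le> (K + 1) * dist p q"
    by (simp add: dist_real_def algebra_simps)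
qed (use lipschitz_on_nonneg[OF \<phi>(1)] in simp)

section \<open>Recovering the cosine transform from bumps\<close>

definition bump :: "'a::metric_space \<Rightarrow> real \<Rightarrow> 'a \<Rightarrow> real" where
  "bump x0 \<delta> x = max 0 (1 - dist x x0 / \<delta>)"

lemma bump_nonneg: "0 \<le> bump x0 \<delta> x"
  by (simp add: bump_def)

lemma abs_bump_le_1: "0 \<le> \<delta> \<Longrightarrow> \<bar>bump x0 \<delta> x\<bar> \<le> 1"
  by (simp add: bump_def)

lemma lipschitz_bump:
  assumes "0 < \<delta>"
  shows "(1 / \<delta>)-lipschitz_on UNIV (bump x0 \<delta>)"
proof (rule lipschitz_onI)
  fix x y :: 'a
  have "\<bar>dist x x0 - dist y x0\<bar> \<le> dist x y"
    using abs_dist_diff_le[of x x0 y] by (simp add: dist_commute)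
  then have "\<bar>(1 - dist x x0 / \<delta>) - (1 - dist y x0 / \<delta>)\<bar> \<le> dist x y / \<delta>"
    using assms by (simp add: abs_minus_commute diff_divide_distrib[symmetric] divide_right_mono)
  moreover have "\<bar>max 0 a - max 0 b\<bar> \<le> \<bar>a - b\<bar>" for a b :: real by arith
  ultimately show "dist (bump x0 \<delta> x) (bump x0 \<delta> y) \<le> 1 / \<delta> * dist x y"
    unfolding bump_def dist_real_def by (metis order_trans times_divide_eq_left mult_1)
qed (use assms in simp)

lemma continuous_on_bump: "0 < \<delta> \<Longrightarrow> continuous_on UNIV (bump x0 \<delta>)"
  by (rule lipschitz_on_continuous_on[OF lipschitz_bump])

lemma bump_neq_0_imp_dist_less: "bump x0 \<delta> x \<noteq> 0 \<Longrightarrow> 0 < \<delta> \<Longrightarrow> dist x x0 < \<delta>"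
  by (auto simp: bump_def max_def field_simps split: if_splits)

lemma bump_ge_half:
  assumes "dist x x0 < \<delta> / 2"
  shows "1 / 2 \<le> bump x0 \<delta> x"
proof -
  have "0 < \<delta>" using assms zero_le_dist[of x x0] by linarith
  with assms have "1 / 2 \<le> 1 - dist x x0 / \<delta>" by (simp add: field_simps)
  then show ?thesis unfolding bump_def by (rule order_trans[OF _ max.cobounded2])
qed

context
  fixes \<mu> :: "'a::euclidean_space measure" and x0 :: 'a and \<delta> :: real
  assumes \<mu>: "prob_space \<mu>" "sets \<mu> = sets borel" and "0 < \<delta>"
begin

lemma integrable_bump_mult:
  assumes "continuous_on UNIV H" "\<And>x. \<bar>H x\<bar> \<le> 1"
  shows "integrable \<mu> (\<lambda>x. bump x0 \<delta> x * H x)"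
  using assms \<open>0 < \<delta>\<close>
  by (intro integrable_bounded_continuous[where B=1] \<mu> continuous_intros continuous_on_bump)
    (auto simp: abs_mult intro!: mult_le_one abs_bump_le_1)

lemma integral_bump_pos:
  assumes "0 < measure \<mu> (ball x0 (\<delta> / 2))"
  shows "0 < (\<integral>x. bump x0 \<delta> x \<partial>\<mu>)"
proof -
  interpret prob_space \<mu> by (fact \<mu>(1))
  have "0 < measure \<mu> (ball x0 (\<delta> / 2)) / 2" using assms by simp
  also have "\<dots> = (\<integral>x. indicator (ball x0 (\<delta> / 2)) x / 2 \<partial>\<mu>)"
    using \<mu>(2) by (simp add: sets.Int_space_eq2)
  also have "\<dots> \<le> (\<integral>x. bump x0 \<delta> x * 1 \<partial>\<mu>)"
    using \<mu>(2) bump_nonneg bump_ge_half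
    by (intro integral_mono integrable_bump_mult integrable_divide integrable_indicator_finite)
      (auto simp: indicator_def dist_commute)
  finally show ?thesis by simp
qed

lemma abs_integral_bump_mult_diff_le:
  assumes H: "R-lipschitz_on UNIV H" "\<And>x. \<bar>H x\<bar> \<le> 1"
  shows "\<bar>(\<integral>x. bump x0 \<delta> x * H x \<partial>\<mu>) - (\<integral>x. bump x0 \<delta> x \<partial>\<mu>) * H x0\<bar>
    \<le> R * \<delta> * (\<integral>x. bump x0 \<delta> x \<partial>\<mu>)"
proof -
  have int: "integrable \<mu> (\<lambda>x. bump x0 \<delta> x * H x)" "integrable \<mu> (bump x0 \<delta>)"
    using H lipschitz_on_continuous_on integrable_bump_mult[of "\<lambda>_. 1"] by (auto intro!: integrable_bump_mult)
  have pointwise: "\<bar>bump x0 \<delta> x * H x - bump x0 \<delta> x * H x0\<bar> \<le> bump x0 \<delta> x * (R * \<delta>)" for x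
  proof (cases "bump x0 \<delta> x = 0")
    case False
    then have "dist x x0 < \<delta>" using \<open>0 < \<delta>\<close> by (rule bump_neq_0_imp_dist_less)
    then have "\<bar>H x - H x0\<bar> \<le> R * \<delta>"
      using lipschitz_onD[OF H(1), of x x0] lipschitz_on_nonneg[OF H(1)]
      by (simp add: dist_real_def) (meson less_imp_le mult_left_mono order_trans)
    then show ?thesis
      using bump_nonneg[of x0 \<delta> x] by (simp add: abs_mult right_diff_distrib[symmetric] mult_left_mono)
  qed simp
  have "\<bar>(\<integral>x. bump x0 \<delta> x * H x \<partial>\<mu>) - (\<integral>x. bump x0 \<delta> x \<partial>\<mu>) * H x0\<bar>
      = \<bar>\<integral>x. bump x0 \<delta> x * H x - bump x0 \<delta> x * H x0 \<partial>\<mu>\<bar>"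
    using int by simp
  also have "\<dots> \<le> (\<integral>x. \<bar>bump x0 \<delta> x * H x - bump x0 \<delta> x * H x0\<bar> \<partial>\<mu>)"
    using integral_norm_bound[of \<mu> "\<lambda>x. bump x0 \<delta> x * H x - bump x0 \<delta> x * H x0"] by simp
  also have "\<dots> \<le> (\<integral>x. bump x0 \<delta> x * (R * \<delta>) \<partial>\<mu>)"
    using int pointwise by (intro integral_mono) auto
  finally show ?thesis by (simp add: mult.commute)
qed

end

text \<open>A point \<open>x0\<close> of the support is seen by the bumps around it: when the \<open>H n\<close> are
  equi-Lipschitz, \<open>H n x0\<close> is recovered up to \<open>R \<delta>\<close> from the bump average.\<close>

lemma tendsto_at_of_bump_integrals:
  fixes \<mu> :: "'a::euclidean_space measure" and H :: "nat \<Rightarrow> 'a \<Rightarrow> real"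
  assumes \<mu>: "prob_space \<mu>" "sets \<mu> = sets borel"
    and pos: "\<And>\<delta>. 0 < \<delta> \<Longrightarrow> 0 < measure \<mu> (ball x0 \<delta>)"
    and H: "\<And>n. R-lipschitz_on UNIV (H n)" "\<And>n x. \<bar>H n x\<bar> \<le> 1"
    and Hs: "R-lipschitz_on UNIV Hs" "\<And>x. \<bar>Hs x\<bar> \<le> 1"
    and lim: "\<And>\<delta>. 0 < \<delta> \<Longrightarrow>
      (\<lambda>n. \<integral>x. bump x0 \<delta> x * H n x \<partial>\<mu>) \<longlonglongrightarrow> (\<integral>x. bump x0 \<delta> x * Hs x \<partial>\<mu>)"
  shows "(\<lambda>n. H n x0) \<longlonglongrightarrow> Hs x0"
proof (rule tendstoI)
  fix \<epsilon> :: real assume "0 < \<epsilon>"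
  have "0 \<le> R" using lipschitz_on_nonneg[OF Hs(1)] .
  define \<delta> where "\<delta> = \<epsilon> / (4 * (R + 1))"
  have "0 < \<delta>" using \<open>0 < \<epsilon>\<close> \<open>0 \<le> R\<close> by (simp add: \<delta>_def)
  have R\<delta>: "2 * R * \<delta> < \<epsilon> / 2"
    using \<open>0 < \<epsilon>\<close> \<open>0 \<le> R\<close> by (simp add: \<delta>_def field_simps)
  define c where "c = (\<integral>x. bump x0 \<delta> x \<partial>\<mu>)"
  have "0 < c"
    unfolding c_def using \<open>0 < \<delta>\<close> by (intro integral_bump_pos \<mu> pos) auto
  have "\<forall>\<^sub>F n in sequentially.
      dist (\<integral>x. bump x0 \<delta> x * H n x \<partial>\<mu>) (\<integral>x. bump x0 \<delta> x * Hs x \<partial>\<mu>) < c * \<epsilon> / 2"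
    using lim[OF \<open>0 < \<delta>\<close>] \<open>0 < c\<close> \<open>0 < \<epsilon>\<close> by (intro tendstoD) auto
  then show "\<forall>\<^sub>F n in sequentially. dist (H n x0) (Hs x0) < \<epsilon>"
  proof eventually_elim
    case (elim n)
    let ?a = "\<integral>x. bump x0 \<delta> x * H n x \<partial>\<mu>" and ?b = "\<integral>x. bump x0 \<delta> x * Hs x \<partial>\<mu>"
    have "\<bar>?a - c * H n x0\<bar> \<le> R * \<delta> * c"
      unfolding c_def by (rule abs_integral_bump_mult_diff_le[OF \<mu> \<open>0 < \<delta>\<close> H])
    moreover have "\<bar>?b - c * Hs x0\<bar> \<le> R * \<delta> * c"
      unfolding c_def by (rule abs_integral_bump_mult_diff_le[OF \<mu> \<open>0 < \<delta>\<close> Hs])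
    moreover have "\<bar>c * H n x0 - c * Hs x0\<bar> \<le> \<bar>?a - c * H n x0\<bar> + \<bar>?a - ?b\<bar> + \<bar>?b - c * Hs x0\<bar>"
      by arith
    ultimately have "\<bar>c * H n x0 - c * Hs x0\<bar> < c * (2 * R * \<delta> + \<epsilon> / 2)"
      using elim by (simp add: dist_real_def algebra_simps)
    then have "c * \<bar>H n x0 - Hs x0\<bar> < c * (2 * R * \<delta> + \<epsilon> / 2)"
      using \<open>0 < c\<close> by (simp add: abs_mult right_diff_distrib[symmetric])
    then have "\<bar>H n x0 - Hs x0\<bar> < 2 * R * \<delta> + \<epsilon> / 2"
      using \<open>0 < c\<close> by simp
    then show ?case using R\<delta> by (simp add: dist_real_def)
  qed
qed

lemma measure_ball_pos_of_msupport:
  assumes "finite_measure \<mu>" "x \<in> msupport \<mu>" "0 < \<delta>"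
  shows "0 < measure \<mu> (ball x \<delta>)"
proof -
  from assms(2) have "\<forall>U. open U \<and> x \<in> U \<longrightarrow> 0 < emeasure \<mu> U"
    by (simp add: msupport_def)
  then have "0 < emeasure \<mu> (ball x \<delta>)" using assms(3) by simp
  then show ?thesis by (simp add: finite_measure.emeasure_eq_measure[OF assms(1)])
qed

lemma tendsto_cos_transform:
  fixes \<mu> Gstar :: "'a::euclidean_space measure" and G :: "nat \<Rightarrow> 'a measure"
  assumes \<mu>: "prob_space \<mu>" "sets \<mu> = sets borel"
    and G: "\<And>n. prob_space (G n)" "\<And>n. sets (G n) = sets borel" "\<And>n. AE b in G n. b \<in> cball 0 R"
    and Gstar: "prob_space Gstar" "sets Gstar = sets borel" "AE b in Gstar. b \<in> cball 0 R"
    and "0 \<le> R"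
    and lim: "(\<lambda>n. lp_dist (lin_model \<sigma> (G n) \<mu>) (lin_model \<sigma> Gstar \<mu>)) \<longlonglongrightarrow> 0"
    and x0: "x0 \<in> msupport \<mu>"
  shows "(\<lambda>n. cos_transform (G n) \<theta> x0) \<longlonglongrightarrow> cos_transform Gstar \<theta> x0"
proof (rule tendsto_at_of_bump_integrals[OF \<mu>])
  show "0 < measure \<mu> (ball x0 \<delta>)" if "0 < \<delta>" for \<delta>
    by (rule measure_ball_pos_of_msupport[OF prob_space.finite_measure[OF \<mu>(1)] x0 that])
  show "R-lipschitz_on UNIV (cos_transform (G n) \<theta>)" for n
    by (rule lipschitz_cos_transform[OF G \<open>0 \<le> R\<close>])
  show "\<bar>cos_transform (G n) \<theta> x\<bar> \<le> 1" for n x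
    by (rule abs_cos_transform_le_1[OF G(1,2)])
  show "R-lipschitz_on UNIV (cos_transform Gstar \<theta>)"
    by (rule lipschitz_cos_transform[OF Gstar \<open>0 \<le> R\<close>])
  show "\<bar>cos_transform Gstar \<theta> x\<bar> \<le> 1" for x
    by (rule abs_cos_transform_le_1[OF Gstar(1,2)])
  fix \<delta> :: real assume "0 < \<delta>"
  have bump: "continuous_on UNIV (bump x0 \<delta>)" "\<bar>bump x0 \<delta> x\<bar> \<le> 1" for x
    using \<open>0 < \<delta>\<close> by (simp_all add: continuous_on_bump abs_bump_le_1)
  have "(\<lambda>n. \<integral>p. bump x0 \<delta> (fst p) * cos (snd p + \<theta>) \<partial>lin_model \<sigma> (G n) \<mu>)
      \<longlonglongrightarrow> (\<integral>p. bump x0 \<delta> (fst p) * cos (snd p + \<theta>) \<partial>lin_model \<sigma> Gstar \<mu>)"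
  proof (rule lp_dist_tendsto_zero_integral_bounded[OF prob_space_lin_model[OF \<mu> G(1,2)]
        sets_lin_model[OF \<mu> G(1,2)] prob_space_lin_model[OF \<mu> Gstar(1,2)]
        sets_lin_model[OF \<mu> Gstar(1,2)] _ lipschitz_on_mult_cos[OF lipschitz_bump[OF \<open>0 < \<delta>\<close>] bump(2)] lim])
    show "\<bar>bump x0 \<delta> (fst p) * cos (snd p + \<theta>)\<bar> \<le> 1" for p
      using bump(2)[of "fst p"] by (simp add: abs_mult mult_le_one)
  qed
  then have "(\<lambda>n. exp (- \<sigma>\<^sup>2 / 2) * (\<integral>x. bump x0 \<delta> x * cos_transform (G n) \<theta> x \<partial>\<mu>))
      \<longlonglongrightarrow> exp (- \<sigma>\<^sup>2 / 2) * (\<integral>x. bump x0 \<delta> x * cos_transform Gstar \<theta> x \<partial>\<mu>)"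
    unfolding integral_lin_model_cos[OF \<mu> G(1,2) bump] integral_lin_model_cos[OF \<mu> Gstar(1,2) bump] .
  then show "(\<lambda>n. \<integral>x. bump x0 \<delta> x * cos_transform (G n) \<theta> x \<partial>\<mu>)
      \<longlonglongrightarrow> (\<integral>x. bump x0 \<delta> x * cos_transform Gstar \<theta> x \<partial>\<mu>)"
    by (rule tendsto_mult_left_iff[THEN iffD1, rotated]) simp
qed

lemma (in ball_supported_sequence) integrals_converge_iexp:
  assumes "\<And>\<theta>. (\<lambda>n. cos_transform (G n) \<theta> x) \<longlonglongrightarrow> cos_transform Gstar \<theta> x"
  shows "integrals_converge (\<lambda>b. iexp (x \<bullet> b))"
  unfolding integrals_converge_def char_eq_cos_transform[OF prob_G sets_G]
    char_eq_cos_transform[OF prob_Gstar sets_Gstar]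
  by (intro tendsto_intros assms)

lemma AE_cball_of_measure_eq_1:
  fixes M :: "'a::real_normed_vector measure"
  assumes "prob_space M" "sets M = sets borel" "measure M {\<beta>. norm \<beta> \<le> R} = 1"
  shows "AE \<beta> in M. \<beta> \<in> cball 0 R"
proof -
  have "cball 0 R = {\<beta>::'a. norm \<beta> \<le> R}" by auto
  then show ?thesis
    using prob_space.AE_in_set_eq_1[OF assms(1), of "cball 0 R"] assms(2,3) by simp
qed

theorem lemma6p2:
  fixes \<mu> Gstar :: "'a::euclidean_space measure"
    and G :: "nat \<Rightarrow> 'a measure"
    and \<sigma> R :: real
  assumes mu_prob: "prob_space \<mu>" and mu_sets: "sets \<mu> = sets borel"
    and mu_supp: "\<exists>U. open U \<and> U \<noteq> {} \<and> U \<subseteq> msupport \<mu>"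
    and sigma_pos: "\<sigma> > 0" and R_pos: "R > 0"
    and G_prob: "\<And>n. prob_space (G n)" and G_sets: "\<And>n. sets (G n) = sets borel"
    and G_bdd: "\<And>n. measure (G n) {\<beta>. norm \<beta> \<le> R} = 1"
    and Gs_prob: "prob_space Gstar" and Gs_sets: "sets Gstar = sets borel"
    and Gs_bdd: "measure Gstar {\<beta>. norm \<beta> \<le> R} = 1"
    and conv: "(\<lambda>n. lp_dist (lin_model \<sigma> (G n) \<mu>) (lin_model \<sigma> Gstar \<mu>)) \<longlonglongrightarrow> 0"
  shows "(\<lambda>n. lp_dist (G n) Gstar) \<longlonglongrightarrow> 0"
proof -
  interpret ball_supported_sequence G Gstar R
    by (rule ball_supported_sequence.intro[OF G_prob G_sets Gs_prob Gs_sets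
          AE_cball_of_measure_eq_1[OF G_prob G_sets G_bdd]
          AE_cball_of_measure_eq_1[OF Gs_prob Gs_sets Gs_bdd]])
  obtain U x0 where U: "open U" "U \<subseteq> msupport \<mu>" and "x0 \<in> U"
    using mu_supp by blast
  obtain r where "0 < r" and r: "ball x0 r \<subseteq> U"
    by (rule openE[OF U(1) \<open>x0 \<in> U\<close>])
  have char: "integrals_converge (\<lambda>b. iexp (x \<bullet> b))" if "x \<in> ball x0 r" for x
  proof (rule integrals_converge_iexp)
    show "(\<lambda>n. cos_transform (G n) \<theta> x) \<longlonglongrightarrow> cos_transform Gstar \<theta> x" for \<theta>
      using that r U(2) R_pos
      by (intro tendsto_cos_transform[OF mu_prob mu_sets G_prob G_sets AE_G Gs_prob Gs_sets AE_Gstar _ conv])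
        auto
  qed
  have "(\<lambda>n. integral\<^sup>L (G n) f) \<longlonglongrightarrow> integral\<^sup>L Gstar f" if "continuous_on UNIV f" for f :: "'a \<Rightarrow> real"
    by (rule tendsto_integral_of_char_near[OF \<open>0 < r\<close> char that])
  then show ?thesis
    by (intro lp_dist_tendsto_zero_of_weak[OF G_prob G_sets Gs_prob Gs_sets compact_cball AE_G AE_Gstar])
qed

end
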